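(* Let $K$ be the uniform kernel, $K_\varepsilon(u)=\mathbb{I}(u<\varepsilon)$, assume $\Theta'\cap\Theta_1$ is not Lebesgue-null and that $\Theta_1\setminus\Theta'$ is a Lebesgue-null subset of $\Theta$. Define the stationary early rejection rates of ejMCMC and of OejMCMC by $$R_{ej}=1-\iiint\min\{1,\tilde\alpha[(\theta,x),\theta^*]\}\,q(\theta^*\mid\theta)\,\hat\pi_\varepsilon(\theta,x\mid y)\,dx\,d\theta^*\,d\theta,$$ $$R_{Oej}=1-\iiint\min\{1,\breve\alpha[(\theta,x),\theta^*]\}\,q(\theta^*\mid\theta)\,\pi_\varepsilon(\theta,x\mid y)\,dx\,d\theta^*\,d\theta.$$ Then $$R_{ej}-R_{Oej}\ge\int_{\Theta'\cap\Theta_1}\int_{\Theta\setminus\Theta'}\min\left\{1,\frac{\pi(\theta^* )q(\theta\mid\theta^* )}{\pi(\theta)q(\theta^*\mid\theta)}\right\}q(\theta^*\mid\theta)\,\pi_\varepsilon(\theta\mid y)\,d\theta^*\,d\theta\ \ (\ge 0).$$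
   Context: Setting: $\theta\in\Theta\subset\mathbb{R}^p$ with prior density $\pi$; data density $p(x\mid\theta)$; observed data $y$; discrepancy $\Delta(x,y)\ge0$; tolerance $\varepsilon>0$; proposal density $q(\theta^*\mid\theta)$; discrepancy-prediction function $h:\Theta\to\mathbb{R}$. ABC joint posterior $\pi_\varepsilon(\theta,x\mid y)\propto\pi(\theta)p(x\mid\theta)K_\varepsilon(\Delta(x,y))$ with marginal $\pi_\varepsilon(\theta\mid y)$; ejMCMC joint target $\hat\pi_\varepsilon(\theta,x\mid y)\propto\pi(\theta)p(x\mid\theta)\min\{K_\varepsilon(\Delta(x,y)),K_\varepsilon(h(\theta))\}$. $\Theta'=\{\theta:h(\theta)<\varepsilon\}$, $\Theta_1=\{\theta:\pi_\varepsilon(\theta\mid y)>0\}$. Early-rejection ratios: $$\breve\alpha[(\theta,x),\theta^*]=\frac{\pi(\theta^* )q(\theta\mid\theta^* )}{\pi(\theta)q(\theta^*\mid\theta)K_\varepsilon(\Delta(x,y))},\qquad \tilde\alpha[(\theta,x),\theta^*]=\frac{\pi(\theta^* )q(\theta\mid\theta^* )}{\pi(\theta)q(\theta^*\mid\theta)}\cdot\frac{K_\varepsilon(h(\theta^* ))}{\min\{K_\varepsilon(\Delta(x,y)),K_\varepsilon(h(\theta))\}}.$$ (OejMCMC rejects $\theta^*$ before simulating when a uniform $w$ exceeds $\breve\alpha$; ejMCMC when $w$ exceeds $\tilde\alpha$.) *)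

theory Defs
  imports "HOL-Analysis.Analysis"
begin

text \<open>Parameters: \<theta> :: 'a (Euclidean space, Theta a Borel subset);
  data x :: 'b (Euclidean space, Lebesgue measure);
  prior density pr on Theta; data density p x th = p(x | th);
  proposal density q ths th = q(ths | th); discrepancy D x y; prediction h.\<close>

definition Kunif :: "real \<Rightarrow> real \<Rightarrow> real" where
  "Kunif \<epsilon> u = (if u < \<epsilon> then 1 else 0)"

definition abc_norm :: "'a::euclidean_space set \<Rightarrow> ('a \<Rightarrow> real) \<Rightarrow> ('b::euclidean_space \<Rightarrow> 'a \<Rightarrow> real)
    \<Rightarrow> ('b \<Rightarrow> 'b \<Rightarrow> real) \<Rightarrow> 'b \<Rightarrow> real \<Rightarrow> real" where
  "abc_norm Th pr p D y \<epsilon> = (LINT th:Th|lborel. (LINT x|lborel. pr th * p x th * Kunif \<epsilon> (D x y)))"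

definition abc_joint :: "'a::euclidean_space set \<Rightarrow> ('a \<Rightarrow> real) \<Rightarrow> ('b::euclidean_space \<Rightarrow> 'a \<Rightarrow> real)
    \<Rightarrow> ('b \<Rightarrow> 'b \<Rightarrow> real) \<Rightarrow> 'b \<Rightarrow> real \<Rightarrow> 'a \<Rightarrow> 'b \<Rightarrow> real" where
  "abc_joint Th pr p D y \<epsilon> th x =
     indicator Th th * pr th * p x th * Kunif \<epsilon> (D x y) / abc_norm Th pr p D y \<epsilon>"

definition abc_marg :: "'a::euclidean_space set \<Rightarrow> ('a \<Rightarrow> real) \<Rightarrow> ('b::euclidean_space \<Rightarrow> 'a \<Rightarrow> real)
    \<Rightarrow> ('b \<Rightarrow> 'b \<Rightarrow> real) \<Rightarrow> 'b \<Rightarrow> real \<Rightarrow> 'a \<Rightarrow> real" where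
  "abc_marg Th pr p D y \<epsilon> th = (LINT x|lborel. abc_joint Th pr p D y \<epsilon> th x)"

definition ej_norm :: "'a::euclidean_space set \<Rightarrow> ('a \<Rightarrow> real) \<Rightarrow> ('b::euclidean_space \<Rightarrow> 'a \<Rightarrow> real)
    \<Rightarrow> ('b \<Rightarrow> 'b \<Rightarrow> real) \<Rightarrow> ('a \<Rightarrow> real) \<Rightarrow> 'b \<Rightarrow> real \<Rightarrow> real" where
  "ej_norm Th pr p D h y \<epsilon> = (LINT th:Th|lborel. (LINT x|lborel.
      pr th * p x th * min (Kunif \<epsilon> (D x y)) (Kunif \<epsilon> (h th))))"

definition ej_joint :: "'a::euclidean_space set \<Rightarrow> ('a \<Rightarrow> real) \<Rightarrow> ('b::euclidean_space \<Rightarrow> 'a \<Rightarrow> real)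
    \<Rightarrow> ('b \<Rightarrow> 'b \<Rightarrow> real) \<Rightarrow> ('a \<Rightarrow> real) \<Rightarrow> 'b \<Rightarrow> real \<Rightarrow> 'a \<Rightarrow> 'b \<Rightarrow> real" where
  "ej_joint Th pr p D h y \<epsilon> th x =
     indicator Th th * pr th * p x th * min (Kunif \<epsilon> (D x y)) (Kunif \<epsilon> (h th))
       / ej_norm Th pr p D h y \<epsilon>"

text \<open>Early-rejection ratios (x / 0 = 0 by convention; irrelevant, since
  the integrands below vanish wherever a denominator vanishes).\<close>
definition alpha_breve :: "('a \<Rightarrow> real) \<Rightarrow> ('a \<Rightarrow> 'a \<Rightarrow> real) \<Rightarrow> ('b \<Rightarrow> 'b \<Rightarrow> real)
    \<Rightarrow> 'b \<Rightarrow> real \<Rightarrow> 'a \<Rightarrow> 'b \<Rightarrow> 'a \<Rightarrow> real" where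
  "alpha_breve pr q D y \<epsilon> th x ths =
     pr ths * q th ths / (pr th * q ths th * Kunif \<epsilon> (D x y))"

definition alpha_tilde :: "('a \<Rightarrow> real) \<Rightarrow> ('a \<Rightarrow> 'a \<Rightarrow> real) \<Rightarrow> ('b \<Rightarrow> 'b \<Rightarrow> real)
    \<Rightarrow> ('a \<Rightarrow> real) \<Rightarrow> 'b \<Rightarrow> real \<Rightarrow> 'a \<Rightarrow> 'b \<Rightarrow> 'a \<Rightarrow> real" where
  "alpha_tilde pr q D h y \<epsilon> th x ths =
     (pr ths * q th ths) / (pr th * q ths th) *
     (Kunif \<epsilon> (h ths) / min (Kunif \<epsilon> (D x y)) (Kunif \<epsilon> (h th)))"

definition R_ej :: "'a::euclidean_space set \<Rightarrow> ('a \<Rightarrow> real) \<Rightarrow> ('b::euclidean_space \<Rightarrow> 'a \<Rightarrow> real)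
    \<Rightarrow> ('a \<Rightarrow> 'a \<Rightarrow> real) \<Rightarrow> ('b \<Rightarrow> 'b \<Rightarrow> real) \<Rightarrow> ('a \<Rightarrow> real) \<Rightarrow> 'b \<Rightarrow> real \<Rightarrow> real" where
  "R_ej Th pr p q D h y \<epsilon> = 1 - (LINT th:Th|lborel. (LINT ths:Th|lborel. (LINT x|lborel.
      min 1 (alpha_tilde pr q D h y \<epsilon> th x ths) * q ths th * ej_joint Th pr p D h y \<epsilon> th x)))"

definition R_Oej :: "'a::euclidean_space set \<Rightarrow> ('a \<Rightarrow> real) \<Rightarrow> ('b::euclidean_space \<Rightarrow> 'a \<Rightarrow> real)
    \<Rightarrow> ('a \<Rightarrow> 'a \<Rightarrow> real) \<Rightarrow> ('b \<Rightarrow> 'b \<Rightarrow> real) \<Rightarrow> 'b \<Rightarrow> real \<Rightarrow> real" where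
  "R_Oej Th pr p q D y \<epsilon> = 1 - (LINT th:Th|lborel. (LINT ths:Th|lborel. (LINT x|lborel.
      min 1 (alpha_breve pr q D y \<epsilon> th x ths) * q ths th * abc_joint Th pr p D y \<epsilon> th x)))"

end

theory Submission
  imports Defs
begin

text \<open>Write \<open>accept_prob \<theta>\<close> for the probability that data simulated at \<open>\<theta>\<close> fall within
  \<open>\<epsilon>\<close> of \<open>y\<close>. Both joint targets have \<open>\<theta>\<close>-marginal proportional to
  \<open>\<pi>(\<theta>) accept_prob \<theta>\<close>, the ejMCMC one with the extra factor \<open>1(h(\<theta>) < \<epsilon>)\<close>. Since
  \<open>\<Theta>\<^sub>1 - \<Theta>'\<close> is null, this factor is one almost everywhere where the ABC marginal is
  positive, so both targets have the same normaliser and the ejMCMC target is the ABC posterior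
  restricted to \<open>\<Theta>'\<close>. Integrating out the data, OejMCMC at \<open>\<theta>\<close> accepts with the
  Metropolis--Hastings probability \<open>mh_move_prob \<Theta> \<theta>\<close> of a move into \<open>\<Theta>\<close>, whereas
  ejMCMC accepts with \<open>1(\<theta> \<in> \<Theta>') mh_move_prob \<Theta>' \<theta>\<close>. The difference of the rejection
  rates is thus the ABC-posterior mean of the difference of these two, which is
  \<open>mh_move_prob (\<Theta> - \<Theta>') \<theta>\<close> on \<open>\<Theta>'\<close> and nonnegative elsewhere.\<close>

lemma Kunif_min: "min (Kunif e a) (Kunif e b) = Kunif e a * Kunif e b"
  by (simp add: Kunif_def)

lemma borel_measurable_Kunif [measurable (raw)]:
  "f \<in> borel_measurable M \<Longrightarrow> (\<lambda>x. Kunif e (f x)) \<in> borel_measurable M"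
  unfolding Kunif_def by measurable

lemma borel_measurable_curried_comp:
  fixes f :: "'a::second_countable_topology \<Rightarrow> 'b::second_countable_topology \<Rightarrow> 'c::topological_space"
  assumes "(\<lambda>(u, v). f u v) \<in> borel_measurable borel"
    and "a \<in> borel_measurable M" "b \<in> borel_measurable M"
  shows "(\<lambda>w. f (a w) (b w)) \<in> borel_measurable M"
proof -
  have "(\<lambda>w. (a w, b w)) \<in> M \<rightarrow>\<^sub>M borel \<Otimes>\<^sub>M borel"
    using assms(2,3) by (rule measurable_Pair)
  from measurable_comp[OF this assms(1)[folded borel_prod]] show ?thesis
    by (simp add: o_def)
qed

lemma borel_measurable_lborel_integral_param:
  fixes f :: "'b::euclidean_space \<Rightarrow> 'a::euclidean_space \<Rightarrow> real"
  assumes "(\<lambda>(x, t). f x t) \<in> borel_measurable borel"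
  shows "(\<lambda>t. LINT x|lborel. f x t) \<in> borel_measurable borel"
proof -
  have "(\<lambda>(t, x). f x t) \<in> borel_measurable (borel \<Otimes>\<^sub>M borel)"
    unfolding case_prod_beta by (intro borel_measurable_curried_comp[OF assms]) measurable
  then have "(\<lambda>(t, x). f x t) \<in> borel_measurable (lborel \<Otimes>\<^sub>M lborel)"
    by (subst measurable_cong_sets[OF sets_pair_measure_cong[OF sets_lborel sets_lborel] refl])
  then show ?thesis
    using lborel.borel_measurable_lebesgue_integral[of "\<lambda>t x. f x t" lborel] by simp
qed

lemma set_integral_nonneg:
  fixes f :: "'a \<Rightarrow> real"
  assumes "\<And>x. x \<in> A \<Longrightarrow> 0 \<le> f x"
  shows "0 \<le> (LINT x:A|M. f x)"
  unfolding set_lebesgue_integral_def using assms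
  by (intro Bochner_Integration.integral_nonneg) (simp add: indicator_def)

locale ejmcmc_model =
  fixes Th :: "'a::euclidean_space set"
    and pr :: "'a \<Rightarrow> real"
    and p :: "'b::euclidean_space \<Rightarrow> 'a \<Rightarrow> real"
    and q :: "'a \<Rightarrow> 'a \<Rightarrow> real"
    and D :: "'b \<Rightarrow> 'b \<Rightarrow> real"
    and h :: "'a \<Rightarrow> real"
    and y :: 'b
    and \<epsilon> :: real
  assumes Th_meas [measurable]: "Th \<in> sets borel"
    and pr_meas [measurable]: "pr \<in> borel_measurable borel"
    and pr_nonneg: "\<And>th. th \<in> Th \<Longrightarrow> pr th \<ge> 0"
    and pr_int: "set_integrable lborel Th pr"
    and p_meas: "(\<lambda>(x, th). p x th) \<in> borel_measurable borel"
    and p_nonneg: "\<And>x th. th \<in> Th \<Longrightarrow> p x th \<ge> 0"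
    and p_int: "\<And>th. th \<in> Th \<Longrightarrow> integrable lborel (\<lambda>x. p x th)"
    and p_one: "\<And>th. th \<in> Th \<Longrightarrow> (LINT x|lborel. p x th) = 1"
    and q_meas: "(\<lambda>(ths, th). q ths th) \<in> borel_measurable borel"
    and q_nonneg: "\<And>ths th. th \<in> Th \<Longrightarrow> ths \<in> Th \<Longrightarrow> q ths th \<ge> 0"
    and q_int: "\<And>th. th \<in> Th \<Longrightarrow> set_integrable lborel Th (\<lambda>ths. q ths th)"
    and q_one: "\<And>th. th \<in> Th \<Longrightarrow> (LINT ths:Th|lborel. q ths th) = 1"
    and D_meas [measurable]: "(\<lambda>x. D x y) \<in> borel_measurable borel"
    and h_meas [measurable]: "h \<in> borel_measurable borel"
begin

abbreviation Z :: real where "Z \<equiv> abc_norm Th pr p D y \<epsilon>"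
abbreviation marg :: "'a \<Rightarrow> real" where "marg \<equiv> abc_marg Th pr p D y \<epsilon>"
abbreviation joint :: "'a \<Rightarrow> 'b \<Rightarrow> real" where "joint \<equiv> abc_joint Th pr p D y \<epsilon>"
abbreviation Th' :: "'a set" where "Th' \<equiv> {th \<in> Th. h th < \<epsilon>}"
abbreviation Th1 :: "'a set" where "Th1 \<equiv> {th \<in> Th. marg th > 0}"
abbreviation mh_ratio :: "'a \<Rightarrow> 'a \<Rightarrow> real" where
  "mh_ratio th ths \<equiv> pr ths * q th ths / (pr th * q ths th)"

lemma p_measurable [measurable (raw)]:
  "a \<in> borel_measurable M \<Longrightarrow> b \<in> borel_measurable M \<Longrightarrow> (\<lambda>w. p (a w) (b w)) \<in> borel_measurable M"
  by (rule borel_measurable_curried_comp[OF p_meas])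

lemma q_measurable [measurable (raw)]:
  "a \<in> borel_measurable M \<Longrightarrow> b \<in> borel_measurable M \<Longrightarrow> (\<lambda>w. q (a w) (b w)) \<in> borel_measurable M"
  by (rule borel_measurable_curried_comp[OF q_meas])

lemma D_measurable [measurable (raw)]:
  "a \<in> borel_measurable M \<Longrightarrow> (\<lambda>w. D (a w) y) \<in> borel_measurable M"
  using measurable_compose[OF _ D_meas] .

definition accept_prob :: "'a \<Rightarrow> real" where
  "accept_prob th = (LINT x|lborel. p x th * Kunif \<epsilon> (D x y))"

lemma accept_prob_measurable [measurable]: "accept_prob \<in> borel_measurable borel"
  unfolding accept_prob_def
  by (rule borel_measurable_lborel_integral_param, subst borel_prod[symmetric]) measurable

lemma accept_prob_bounds:
  assumes "th \<in> Th"
  shows "0 \<le> accept_prob th" "accept_prob th \<le> 1"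
proof -
  have le_p: "p x th * Kunif \<epsilon> (D x y) \<le> p x th" and nonneg: "0 \<le> p x th * Kunif \<epsilon> (D x y)" for x
    using p_nonneg[OF assms] by (auto simp: Kunif_def)
  then have "integrable lborel (\<lambda>x. p x th * Kunif \<epsilon> (D x y))"
    using p_nonneg[OF assms] by (intro Bochner_Integration.integrable_bound[OF p_int[OF assms]]) auto
  then have "accept_prob th \<le> (LINT x|lborel. p x th)"
    unfolding accept_prob_def using p_int[OF assms] le_p by (rule integral_mono)
  then show "accept_prob th \<le> 1"
    using p_one[OF assms] by simp
  show "0 \<le> accept_prob th"
    unfolding accept_prob_def using nonneg by (intro Bochner_Integration.integral_nonneg)
qed

lemma abc_marg_eq: "marg th = indicator Th th * pr th * accept_prob th / Z"
proof -
  have "joint th = (\<lambda>x. indicator Th th * pr th / Z * (p x th * Kunif \<epsilon> (D x y)))"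
    by (simp add: abc_joint_def fun_eq_iff)
  then show ?thesis
    by (simp add: abc_marg_def accept_prob_def)
qed

lemma abc_norm_eq: "Z = (LINT th:Th|lborel. pr th * accept_prob th)"
  by (simp add: abc_norm_def accept_prob_def mult.assoc)

lemma ej_norm_eq:
  "ej_norm Th pr p D h y \<epsilon> = (LINT th:Th|lborel. pr th * accept_prob th * Kunif \<epsilon> (h th))"
proof -
  have "(LINT x|lborel. pr th * p x th * min (Kunif \<epsilon> (D x y)) (Kunif \<epsilon> (h th)))
      = pr th * accept_prob th * Kunif \<epsilon> (h th)" for th
  proof -
    have "(\<lambda>x. pr th * p x th * min (Kunif \<epsilon> (D x y)) (Kunif \<epsilon> (h th)))
        = (\<lambda>x. pr th * Kunif \<epsilon> (h th) * (p x th * Kunif \<epsilon> (D x y)))"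
      by (simp add: Kunif_min fun_eq_iff ac_simps)
    then show ?thesis
      by (simp add: accept_prob_def)
  qed
  then show ?thesis
    by (simp add: ej_norm_def)
qed

lemma abc_norm_nonneg: "0 \<le> Z"
  unfolding abc_norm_eq
  by (intro set_integral_nonneg) (simp add: pr_nonneg accept_prob_bounds)

lemma abc_marg_nonneg: "0 \<le> marg th"
  by (simp add: abc_marg_eq indicator_def pr_nonneg accept_prob_bounds abc_norm_nonneg)

text \<open>Since division by zero yields zero, a positive marginal forces a positive normaliser.\<close>
lemma abc_norm_pos: "0 < marg th \<Longrightarrow> 0 < Z"
  using abc_norm_nonneg by (cases "Z = 0") (auto simp: abc_marg_eq)

lemma abc_marg_measurable [measurable]: "marg \<in> borel_measurable borel"
  unfolding abc_marg_eq by measurable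

lemma integrable_abc_marg: "integrable lborel marg"
proof (rule Bochner_Integration.integrable_bound)
  show "integrable lborel (\<lambda>th. indicator Th th * pr th / Z)"
    using pr_int by (simp add: set_integrable_def)
  show "AE th in lborel. norm (marg th) \<le> norm (indicator Th th * pr th / Z)"
    using abc_norm_nonneg
    by (auto simp: abc_marg_eq indicator_def pr_nonneg accept_prob_bounds
        intro!: divide_right_mono mult_left_le)
qed simp

text \<open>Off a null set, \<open>h th \<ge> \<epsilon>\<close> forces a vanishing ABC marginal, so the extra kernel
  factor in the ejMCMC target does not change its mass.\<close>
lemma ej_norm_eq_abc_norm:
  assumes null: "Th1 - Th' \<in> null_sets lborel" and Z_pos: "0 < Z"
  shows "ej_norm Th pr p D h y \<epsilon> = Z"
  unfolding ej_norm_eq abc_norm_eq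
proof (rule set_lebesgue_integral_cong_AE)
  show "AE th in lborel. th \<in> Th \<longrightarrow>
      pr th * accept_prob th * Kunif \<epsilon> (h th) = pr th * accept_prob th"
    using AE_not_in[OF null]
  proof eventually_elim
    case (elim th)
    show ?case
    proof (intro impI)
      assume th: "th \<in> Th"
      show "pr th * accept_prob th * Kunif \<epsilon> (h th) = pr th * accept_prob th"
      proof (cases "h th < \<epsilon>")
        case False
        then have "marg th \<le> 0" using elim th by auto
        then have "pr th * accept_prob th \<le> 0"
          using th Z_pos by (simp add: abc_marg_eq divide_le_0_iff)
        moreover have "0 \<le> pr th * accept_prob th"
          using th by (simp add: pr_nonneg accept_prob_bounds)
        ultimately show ?thesis by simp
      qed (simp add: Kunif_def)
    qed
  qed
qed measurable

lemma ej_joint_eq_abc_joint: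
  assumes "ej_norm Th pr p D h y \<epsilon> = Z"
  shows "ej_joint Th pr p D h y \<epsilon> th x = Kunif \<epsilon> (h th) * joint th x"
  using assms by (simp add: ej_joint_def abc_joint_def Kunif_min)

lemma abc_joint_nonzero:
  "joint th x \<noteq> 0 \<Longrightarrow> th \<in> Th \<and> Kunif \<epsilon> (D x y) = 1"
  by (auto simp: abc_joint_def Kunif_def indicator_def split: if_splits)

lemma Oej_acceptance_integral:
  "(LINT x|lborel. min 1 (alpha_breve pr q D y \<epsilon> th x ths) * q ths th * joint th x)
     = min 1 (mh_ratio th ths) * q ths th * marg th"
proof -
  have "(\<lambda>x. min 1 (alpha_breve pr q D y \<epsilon> th x ths) * q ths th * joint th x)
      = (\<lambda>x. min 1 (mh_ratio th ths) * q ths th * joint th x)"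
  proof
    fix x
    show "min 1 (alpha_breve pr q D y \<epsilon> th x ths) * q ths th * joint th x
        = min 1 (mh_ratio th ths) * q ths th * joint th x"
      using abc_joint_nonzero[of th x] by (cases "joint th x = 0") (auto simp: alpha_breve_def)
  qed
  then show ?thesis
    by (simp add: abc_marg_def)
qed

lemma ej_acceptance_integral:
  assumes "ej_norm Th pr p D h y \<epsilon> = Z"
  shows "(LINT x|lborel. min 1 (alpha_tilde pr q D h y \<epsilon> th x ths) * q ths th
            * ej_joint Th pr p D h y \<epsilon> th x)
     = Kunif \<epsilon> (h th) * (min 1 (mh_ratio th ths * Kunif \<epsilon> (h ths)) * q ths th) * marg th"
proof -
  have "(\<lambda>x. min 1 (alpha_tilde pr q D h y \<epsilon> th x ths) * q ths th * ej_joint Th pr p D h y \<epsilon> th x)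
      = (\<lambda>x. Kunif \<epsilon> (h th) * (min 1 (mh_ratio th ths * Kunif \<epsilon> (h ths)) * q ths th) * joint th x)"
  proof
    fix x
    show "min 1 (alpha_tilde pr q D h y \<epsilon> th x ths) * q ths th * ej_joint Th pr p D h y \<epsilon> th x
        = Kunif \<epsilon> (h th) * (min 1 (mh_ratio th ths * Kunif \<epsilon> (h ths)) * q ths th) * joint th x"
      using abc_joint_nonzero[of th x]
      by (cases "joint th x = 0")
        (auto simp: alpha_tilde_def ej_joint_eq_abc_joint[OF assms] Kunif_def)
  qed
  then show ?thesis
    by (simp add: abc_marg_def)
qed

definition mh_move_prob :: "'a set \<Rightarrow> 'a \<Rightarrow> real" where
  "mh_move_prob S th = (LINT ths:S|lborel. min 1 (mh_ratio th ths) * q ths th)"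

lemma mh_move_prob_measurable [measurable]:
  assumes [measurable]: "S \<in> sets borel"
  shows "mh_move_prob S \<in> borel_measurable borel"
  unfolding mh_move_prob_def set_lebesgue_integral_def
  by (rule borel_measurable_lborel_integral_param, subst borel_prod[symmetric]) measurable

lemma mh_integrand_bounds:
  assumes "th \<in> Th" "ths \<in> Th"
  shows "0 \<le> min 1 (mh_ratio th ths) * q ths th" "min 1 (mh_ratio th ths) * q ths th \<le> q ths th"
  using assms by (auto simp: pr_nonneg q_nonneg intro: mult_left_le_one_le)

lemma set_integrable_mh_integrand:
  assumes "th \<in> Th" "S \<subseteq> Th" "S \<in> sets borel"
  shows "set_integrable lborel S (\<lambda>ths. min 1 (mh_ratio th ths) * q ths th)"
proof (rule set_integrable_bound)
  show "set_integrable lborel S (\<lambda>ths. q ths th)"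
    using set_integrable_subset[OF q_int[OF assms(1)]] assms(2,3) by simp
  show "AE ths in lborel. ths \<in> S \<longrightarrow>
      norm (min 1 (mh_ratio th ths) * q ths th) \<le> norm (q ths th)"
  proof (intro AE_I2 impI)
    fix ths
    assume "ths \<in> S"
    then show "norm (min 1 (mh_ratio th ths) * q ths th) \<le> norm (q ths th)"
      using assms(2) mh_integrand_bounds[OF assms(1)] by fastforce
  qed
qed (use assms(3) in \<open>simp add: set_borel_measurable_def\<close>)

lemma mh_move_prob_nonneg:
  assumes "th \<in> Th" "S \<subseteq> Th"
  shows "0 \<le> mh_move_prob S th"
  unfolding mh_move_prob_def using assms mh_integrand_bounds by (intro set_integral_nonneg) auto

lemma mh_move_prob_split:
  assumes "th \<in> Th" "S \<subseteq> Th" "S \<in> sets borel"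
  shows "mh_move_prob Th th = mh_move_prob S th + mh_move_prob (Th - S) th"
proof -
  have "Th = S \<union> (Th - S)"
    using assms(2) by blast
  moreover have "(LINT ths:S \<union> (Th - S)|lborel. min 1 (mh_ratio th ths) * q ths th)
      = mh_move_prob S th + mh_move_prob (Th - S) th"
    unfolding mh_move_prob_def using assms
    by (intro set_integral_Un set_integrable_mh_integrand) auto
  ultimately show ?thesis
    unfolding mh_move_prob_def by simp
qed

lemma mh_move_prob_le_one:
  assumes "th \<in> Th" "S \<subseteq> Th" "S \<in> sets borel"
  shows "mh_move_prob S th \<le> 1"
proof -
  have "mh_move_prob Th th \<le> (LINT ths:Th|lborel. q ths th)"
    unfolding mh_move_prob_def using assms mh_integrand_bounds
    by (intro set_integral_mono set_integrable_mh_integrand q_int) auto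
  then show ?thesis
    using mh_move_prob_split[OF assms] mh_move_prob_nonneg[OF assms(1), of "Th - S"] q_one[OF assms(1)]
    by simp
qed

lemma set_integral_mh_integrand_mult:
  "(LINT ths:S|lborel. min 1 (mh_ratio th ths) * q ths th * c) = c * mh_move_prob S th"
  by (simp add: mh_move_prob_def mult.commute)

lemma R_Oej_eq: "R_Oej Th pr p q D y \<epsilon> = 1 - (LINT th:Th|lborel. marg th * mh_move_prob Th th)"
  by (simp only: R_Oej_def Oej_acceptance_integral set_integral_mh_integrand_mult)

text \<open>Under ejMCMC a move is accepted only if both the current and the proposed parameter
  have predicted discrepancy below \<open>\<epsilon>\<close>.\<close>
lemma R_ej_eq:
  assumes "ej_norm Th pr p D h y \<epsilon> = Z"
  shows "R_ej Th pr p q D h y \<epsilon>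
    = 1 - (LINT th:Th|lborel. Kunif \<epsilon> (h th) * (marg th * mh_move_prob Th' th))"
proof -
  have "(LINT ths:Th|lborel.
          Kunif \<epsilon> (h th) * (min 1 (mh_ratio th ths * Kunif \<epsilon> (h ths)) * q ths th) * marg th)
      = Kunif \<epsilon> (h th) * (marg th * mh_move_prob Th' th)" for th
  proof -
    have "(LINT ths:Th|lborel.
            Kunif \<epsilon> (h th) * (min 1 (mh_ratio th ths * Kunif \<epsilon> (h ths)) * q ths th) * marg th)
        = (LINT ths|lborel. Kunif \<epsilon> (h th) * marg th
            * (indicator Th' ths * (min 1 (mh_ratio th ths) * q ths th)))"
      unfolding set_lebesgue_integral_def
      by (rule Bochner_Integration.integral_cong) (auto simp: Kunif_def indicator_def)
    then show ?thesis
      by (simp add: mh_move_prob_def set_lebesgue_integral_def mult.assoc)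
  qed
  then show ?thesis
    by (simp only: R_ej_def ej_acceptance_integral[OF assms])
qed

lemma set_integrable_marg_mh_move_prob:
  assumes [measurable]: "c \<in> borel_measurable borel" "S \<in> sets borel"
    and "S \<subseteq> Th" "\<And>th. th \<in> Th \<Longrightarrow> 0 \<le> c th \<and> c th \<le> 1"
  shows "set_integrable lborel Th (\<lambda>th. c th * (marg th * mh_move_prob S th))"
proof (rule set_integrable_bound)
  show "set_integrable lborel Th marg"
    unfolding set_integrable_def using integrable_mult_indicator[OF _ integrable_abc_marg] by simp
  show "AE th in lborel. th \<in> Th \<longrightarrow> norm (c th * (marg th * mh_move_prob S th)) \<le> norm (marg th)"
  proof (intro AE_I2 impI)
    fix th
    assume th: "th \<in> Th"
    have "c th * (marg th * mh_move_prob S th) \<le> 1 * (marg th * 1)"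
      using assms(3,4) th abc_marg_nonneg mh_move_prob_nonneg mh_move_prob_le_one
      by (intro mult_mono) auto
    then show "norm (c th * (marg th * mh_move_prob S th)) \<le> norm (marg th)"
      using assms(3,4) th abc_marg_nonneg mh_move_prob_nonneg by simp
  qed
qed (simp add: set_borel_measurable_def)

lemma set_integral_support_abc_marg:
  "(LINT th:Th' \<inter> Th1|lborel. marg th * g th)
     = (LINT th:Th|lborel. indicator Th' th * (marg th * g th))"
  unfolding set_lebesgue_integral_def
proof (rule Bochner_Integration.integral_cong)
  fix th
  show "indicator (Th' \<inter> Th1) th *\<^sub>R (marg th * g th)
      = indicator Th th *\<^sub>R (indicator Th' th * (marg th * g th))"
    using abc_marg_nonneg[of th] by (auto simp: indicator_def)
qed simp

lemma early_rejection_rate_gap: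
  assumes "ej_norm Th pr p D h y \<epsilon> = Z"
  shows "(LINT th:Th' \<inter> Th1|lborel. marg th * mh_move_prob (Th - Th') th)
           \<le> R_ej Th pr p q D h y \<epsilon> - R_Oej Th pr p q D y \<epsilon>"
proof -
  have int_O: "set_integrable lborel Th (\<lambda>th. marg th * mh_move_prob Th th)"
    using set_integrable_marg_mh_move_prob[of "\<lambda>_. 1" Th] by simp
  have int_E: "set_integrable lborel Th (\<lambda>th. Kunif \<epsilon> (h th) * (marg th * mh_move_prob Th' th))"
    by (rule set_integrable_marg_mh_move_prob) (auto simp: Kunif_def)
  have int_R: "set_integrable lborel Th
      (\<lambda>th. indicator Th' th * (marg th * mh_move_prob (Th - Th') th))"
    by (rule set_integrable_marg_mh_move_prob) auto
  have "(LINT th:Th' \<inter> Th1|lborel. marg th * mh_move_prob (Th - Th') th)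
      = (LINT th:Th|lborel. indicator Th' th * (marg th * mh_move_prob (Th - Th') th))"
    by (rule set_integral_support_abc_marg)
  also have "\<dots> \<le> (LINT th:Th|lborel.
      marg th * mh_move_prob Th th - Kunif \<epsilon> (h th) * (marg th * mh_move_prob Th' th))"
  proof (rule set_integral_mono[OF int_R set_integral_diff(1)[OF int_O int_E]])
    fix th
    assume th: "th \<in> Th"
    show "indicator Th' th * (marg th * mh_move_prob (Th - Th') th)
        \<le> marg th * mh_move_prob Th th - Kunif \<epsilon> (h th) * (marg th * mh_move_prob Th' th)"
    proof (cases "h th < \<epsilon>")
      case True
      then show ?thesis
        using th mh_move_prob_split[OF th, of Th'] by (simp add: Kunif_def algebra_simps)
    next
      case False
      then show ?thesis
        using th abc_marg_nonneg mh_move_prob_nonneg by (simp add: Kunif_def)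
    qed
  qed
  also have "\<dots> = R_ej Th pr p q D h y \<epsilon> - R_Oej Th pr p q D y \<epsilon>"
    using set_integral_diff(2)[OF int_O int_E] by (simp add: R_ej_eq[OF assms] R_Oej_eq)
  finally show ?thesis .
qed

end

theorem proposition3:
  fixes Th :: "'a::euclidean_space set"
    and pr :: "'a \<Rightarrow> real"
    and p :: "'b::euclidean_space \<Rightarrow> 'a \<Rightarrow> real"
    and q :: "'a \<Rightarrow> 'a \<Rightarrow> real"
    and D :: "'b \<Rightarrow> 'b \<Rightarrow> real"
    and h :: "'a \<Rightarrow> real"
    and y :: 'b
    and \<epsilon> :: real
  assumes Th_meas: "Th \<in> sets borel"
    and eps: "\<epsilon> > 0"
    and pr_meas: "pr \<in> borel_measurable borel"
    and pr_nonneg: "\<And>th. th \<in> Th \<Longrightarrow> pr th \<ge> 0"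
    and pr_int: "set_integrable lborel Th pr"
    and pr_one: "(LINT th:Th|lborel. pr th) = 1"
    and p_meas: "(\<lambda>(x, th). p x th) \<in> borel_measurable borel"
    and p_nonneg: "\<And>x th. th \<in> Th \<Longrightarrow> p x th \<ge> 0"
    and p_int: "\<And>th. th \<in> Th \<Longrightarrow> integrable lborel (\<lambda>x. p x th)"
    and p_one: "\<And>th. th \<in> Th \<Longrightarrow> (LINT x|lborel. p x th) = 1"
    and q_meas: "(\<lambda>(ths, th). q ths th) \<in> borel_measurable borel"
    and q_nonneg: "\<And>ths th. th \<in> Th \<Longrightarrow> ths \<in> Th \<Longrightarrow> q ths th \<ge> 0"
    and q_int: "\<And>th. th \<in> Th \<Longrightarrow> set_integrable lborel Th (\<lambda>ths. q ths th)"
    and q_one: "\<And>th. th \<in> Th \<Longrightarrow> (LINT ths:Th|lborel. q ths th) = 1"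
    and D_meas: "(\<lambda>x. D x y) \<in> borel_measurable borel"
    and D_nonneg: "\<And>x. D x y \<ge> 0"
    and h_meas: "h \<in> borel_measurable borel"
    and nonnull: "{th \<in> Th. h th < \<epsilon>} \<inter> {th \<in> Th. abc_marg Th pr p D y \<epsilon> th > 0} \<notin> null_sets lborel"
    and null: "{th \<in> Th. abc_marg Th pr p D y \<epsilon> th > 0} - {th \<in> Th. h th < \<epsilon>} \<in> null_sets lborel"
  shows "R_ej Th pr p q D h y \<epsilon> - R_Oej Th pr p q D y \<epsilon> \<ge>
           (LINT th:({th \<in> Th. h th < \<epsilon>} \<inter> {th \<in> Th. abc_marg Th pr p D y \<epsilon> th > 0})|lborel.
              (LINT ths:(Th - {th \<in> Th. h th < \<epsilon>})|lborel.
                 min 1 (pr ths * q th ths / (pr th * q ths th)) * q ths th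
                   * abc_marg Th pr p D y \<epsilon> th))
       \<and> (LINT th:({th \<in> Th. h th < \<epsilon>} \<inter> {th \<in> Th. abc_marg Th pr p D y \<epsilon> th > 0})|lborel.
              (LINT ths:(Th - {th \<in> Th. h th < \<epsilon>})|lborel.
                 min 1 (pr ths * q th ths / (pr th * q ths th)) * q ths th
                   * abc_marg Th pr p D y \<epsilon> th)) \<ge> 0"
proof -
  interpret ejmcmc_model Th pr p q D h y \<epsilon>
    by unfold_locales (fact assms)+
  from nonnull have "Th' \<inter> Th1 \<noteq> {}"
    by auto
  then have Z_pos: "0 < Z"
    by (auto intro: abc_norm_pos)
  have inner: "(LINT ths:(Th - Th')|lborel. min 1 (mh_ratio th ths) * q ths th * marg th)
      = marg th * mh_move_prob (Th - Th') th" for th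
    by (rule set_integral_mh_integrand_mult)
  have "0 \<le> (LINT th:Th' \<inter> Th1|lborel. marg th * mh_move_prob (Th - Th') th)"
    using abc_marg_nonneg mh_move_prob_nonneg by (intro set_integral_nonneg) auto
  then show ?thesis
    using early_rejection_rate_gap[OF ej_norm_eq_abc_norm[OF null Z_pos]] by (simp only: inner)
qed

end
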